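(* Let $f:[a,b]\to\mathbb{C}$ be continuous and write $f=g+ih$ with $g,h:[a,b]\to\mathbb{R}$ its real and imaginary parts. If $h$ is Lipschitz on $[a,b]$, then $$\dim_H(G(g+ih))=\dim_H(G(g+h))=\dim_H(G((g,h)))=\dim_H(G(g)),$$ $$\overline{\dim}_B(G(g+ih))=\overline{\dim}_B(G(g+h))=\overline{\dim}_B(G((g,h)))=\overline{\dim}_B(G(g)),$$ $$\dim_P(G(g+ih))=\dim_P(G(g+h))=\dim_P(G((g,h)))=\dim_P(G(g)).$$
   Context: For a function $u$ on $[a,b]$, $G(u)=\{(x,u(x)):x\in[a,b]\}$ denotes its graph. The graph of the complex-valued $g+ih$ is a subset of $\mathbb{R}\times\mathbb{C}\cong\mathbb{R}^3$, the graph of the vector-valued $(g,h):[a,b]\to\mathbb{R}^2$ is a subset of $\mathbb{R}^3$, and graphs of real-valued functions $g$, $g+h$ are subsets of $\mathbb{R}^2$, all with Euclidean metrics. $\dim_H$, $\overline{\dim}_B$, $\dim_P$ denote Hausdorff, upper box and packing dimension. *)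

theory Defs
  imports "HOL-Analysis.Analysis"
begin

definition graph_on :: "real set \<Rightarrow> (real \<Rightarrow> 'b) \<Rightarrow> (real \<times> 'b) set" where
  "graph_on I u = {(x, u x) | x. x \<in> I}"

text \<open>delta-approximation of the s-dimensional Hausdorff measure: infimum over countable
  covers (sequences, finite covers padded with empty sets) by bounded sets of diameter at most delta.\<close>
definition hausdorff_approx :: "real \<Rightarrow> real \<Rightarrow> 'a::metric_space set \<Rightarrow> ennreal" where
  "hausdorff_approx s \<delta> E =
     (INF U \<in> {U :: nat \<Rightarrow> 'a set. E \<subseteq> (\<Union>i. U i) \<and> (\<forall>i. bounded (U i) \<and> diameter (U i) \<le> \<delta>)}.
        (\<Sum>i. ennreal (diameter (U i) powr s)))"

definition hausdorff_measure :: "real \<Rightarrow> 'a::metric_space set \<Rightarrow> ennreal" where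
  "hausdorff_measure s E = (SUP \<delta> \<in> {0<..}. hausdorff_approx s \<delta> E)"

definition hausdorff_dim :: "'a::metric_space set \<Rightarrow> ereal" where
  "hausdorff_dim E = Inf {ereal s | s. 0 \<le> s \<and> hausdorff_measure s E = 0}"

definition covering_number :: "real \<Rightarrow> 'a::metric_space set \<Rightarrow> enat" where
  "covering_number \<delta> E = Inf {enat n | n. \<exists>U :: nat \<Rightarrow> 'a set.
      E \<subseteq> (\<Union>i<n. U i) \<and> (\<forall>i<n. bounded (U i) \<and> diameter (U i) \<le> \<delta>)}"

definition upper_box_dim :: "'a::metric_space set \<Rightarrow> ereal" where
  "upper_box_dim E = Limsup (at_right 0)
     (\<lambda>\<delta>. if covering_number \<delta> E = \<infinity> then \<infinity>
           else ereal (ln (real (the_enat (covering_number \<delta> E))) / - ln \<delta>))"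

text \<open>P^s_delta(E): supremum of sum (diam B_i)^s = (2 r_i)^s over (finite) collections of
  pairwise disjoint closed balls with centres in E and radii 0 < r_i \<le> delta.\<close>
definition packing_approx :: "real \<Rightarrow> real \<Rightarrow> 'a::metric_space set \<Rightarrow> ennreal" where
  "packing_approx s \<delta> E =
     (SUP B \<in> {B :: ('a \<times> real) set. finite B \<and> (\<forall>(x, r) \<in> B. x \<in> E \<and> 0 < r \<and> r \<le> \<delta>) \<and>
               disjoint_family_on (\<lambda>(x, r). cball x r) B}.
        (\<Sum>(x, r) \<in> B. ennreal ((2 * r) powr s)))"

definition packing_premeasure :: "real \<Rightarrow> 'a::metric_space set \<Rightarrow> ennreal" where
  "packing_premeasure s E = (INF \<delta> \<in> {0<..}. packing_approx s \<delta> E)"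

definition packing_measure :: "real \<Rightarrow> 'a::metric_space set \<Rightarrow> ennreal" where
  "packing_measure s E =
     (INF F \<in> {F :: nat \<Rightarrow> 'a set. E \<subseteq> (\<Union>i. F i)}. (\<Sum>i. packing_premeasure s (F i)))"

definition packing_dim :: "'a::metric_space set \<Rightarrow> ereal" where
  "packing_dim E = Inf {ereal s | s. 0 \<le> s \<and> packing_measure s E = 0}"

end

theory Submission
  imports Defs
begin

text \<open>A Lipschitz map does not increase Hausdorff, upper box or packing dimension: covers and
  packings of a set are carried to covers and packings of its image with diameters and radii
  scaled by the Lipschitz constant K, and rescaling \<delta> by K does not change the exponent
  ln N(\<delta>) / -ln \<delta> in the limit. Since h is Lipschitz, the maps (x, g x) \<mapsto> (x, g x + h x),
  (x, g x) \<mapsto> (x, (g x, h x)) and their inverses are Lipschitz on the respective graphs, and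
  (y, z) \<mapsto> y + i z is an isometry from \<real> \<times> \<real> onto \<complex>. Hence the four graphs are Lipschitz
  images of one another and share all three dimensions.\<close>

lemma lipschitz_on_image_bounded_diameter:
  fixes F :: "'a::metric_space \<Rightarrow> 'b::metric_space"
  assumes lip: "K-lipschitz_on S F" and "bounded S"
  shows "bounded (F ` S) \<and> diameter (F ` S) \<le> K * diameter S"
proof (cases "S = {}")
  case False
  have dist_le: "dist (F x) (F y) \<le> K * diameter S" if "x \<in> S" "y \<in> S" for x y
  proof -
    have "dist (F x) (F y) \<le> K * dist x y" using lipschitz_onD[OF lip that] .
    also have "\<dots> \<le> K * diameter S"
      using diameter_bounded_bound[OF \<open>bounded S\<close> that] lipschitz_on_nonneg[OF lip]
      by (rule mult_left_mono)
    finally show ?thesis .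
  qed
  then have "bounded (F ` S)"
    using False unfolding bounded_def by blast
  moreover have "diameter (F ` S) \<le> K * diameter S"
    using False dist_le unfolding diameter_def by (auto intro: cSUP_least)
  ultimately show ?thesis ..
qed simp

lemma lipschitz_on_image_Int_bounded_diameter:
  fixes F :: "'a::metric_space \<Rightarrow> 'b::metric_space"
  assumes lip: "K-lipschitz_on E F" and "bounded U"
  shows "bounded (F ` (U \<inter> E)) \<and> diameter (F ` (U \<inter> E)) \<le> K * diameter U"
proof -
  have "bounded (U \<inter> E)" using \<open>bounded U\<close> by (rule bounded_subset) blast
  moreover have "diameter (U \<inter> E) \<le> diameter U"
    using \<open>bounded U\<close> by (intro diameter_subset) auto
  ultimately show ?thesis
    using lipschitz_on_image_bounded_diameter[OF lipschitz_on_subset[OF lip, of "U \<inter> E"]]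
      lipschitz_on_nonneg[OF lip] by (meson inf_le2 mult_left_mono order_trans)
qed

lemma ennreal_le_mult_INF:
  fixes X :: ennreal
  assumes "c > 0" and "\<And>x. x \<in> D \<Longrightarrow> X \<le> ennreal c * g x"
  shows "X \<le> ennreal c * (INF x\<in>D. g x)"
proof -
  have inv: "ennreal (1 / c) * ennreal c = 1"
    using \<open>c > 0\<close> by (simp flip: ennreal_mult)
  have "ennreal (1 / c) * X \<le> g x" if "x \<in> D" for x
    using mult_left_mono[OF assms(2)[OF that], of "ennreal (1 / c)"] inv
    by (simp add: mult.assoc[symmetric])
  then have "ennreal (1 / c) * X \<le> (INF x\<in>D. g x)"
    by (rule INF_greatest)
  then have "ennreal c * (ennreal (1 / c) * X) \<le> ennreal c * (INF x\<in>D. g x)"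
    by (rule mult_left_mono) simp
  moreover have "ennreal c * (ennreal (1 / c) * X) = X"
    using inv by (metis mult.assoc mult.commute mult_1)
  ultimately show ?thesis
    by simp
qed

lemma Inf_vanishing_exponents_mono:
  assumes "\<And>s. 0 \<le> s \<Longrightarrow> \<mu> s = 0 \<Longrightarrow> \<nu> s = 0"
  shows "Inf {ereal s |s. 0 \<le> s \<and> \<nu> s = 0} \<le> Inf {ereal s |s. 0 \<le> s \<and> \<mu> s = 0}"
  using assms by (intro Inf_superset_mono) blast

section \<open>Hausdorff dimension\<close>

lemma hausdorff_approx_lipschitz_image:
  fixes F :: "'a::metric_space \<Rightarrow> 'b::metric_space"
  assumes lip: "K-lipschitz_on E F" and "K > 0" and "0 \<le> s"
  shows "hausdorff_approx s \<delta> (F ` E) \<le> ennreal (K powr s) * hausdorff_approx s (\<delta> / K) E"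
  unfolding hausdorff_approx_def[of s "\<delta> / K"]
proof (rule ennreal_le_mult_INF)
  show "K powr s > 0" using \<open>K > 0\<close> by simp
  fix U :: "nat \<Rightarrow> 'a set"
  assume "U \<in> {U. E \<subseteq> (\<Union>i. U i) \<and> (\<forall>i. bounded (U i) \<and> diameter (U i) \<le> \<delta> / K)}"
  then have cover: "E \<subseteq> (\<Union>i. U i)" and U: "\<And>i. bounded (U i)" "\<And>i. diameter (U i) \<le> \<delta> / K"
    by auto
  define V where "V i = F ` (U i \<inter> E)" for i
  have V: "bounded (V i)" "diameter (V i) \<le> K * diameter (U i)" for i
    unfolding V_def using lipschitz_on_image_Int_bounded_diameter[OF lip U(1)] by auto
  have "diameter (V i) \<le> \<delta>" for i
    using V(2)[of i] mult_left_mono[OF U(2)[of i], of K] \<open>K > 0\<close> by simp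
  moreover have "F ` E \<subseteq> (\<Union>i. V i)" using cover unfolding V_def by blast
  ultimately have "hausdorff_approx s \<delta> (F ` E) \<le> (\<Sum>i. ennreal (diameter (V i) powr s))"
    unfolding hausdorff_approx_def using V(1) by (intro INF_lower) auto
  also have "\<dots> \<le> (\<Sum>i. ennreal (K powr s) * ennreal (diameter (U i) powr s))"
  proof (intro suminf_le ennreal_leI, simp_all flip: ennreal_mult)
    fix i
    have "diameter (V i) powr s \<le> (K * diameter (U i)) powr s"
      using V(2) \<open>0 \<le> s\<close> diameter_ge_0[OF V(1)] by (intro powr_mono2) auto
    then show "diameter (V i) powr s \<le> K powr s * diameter (U i) powr s"
      using \<open>K > 0\<close> by (simp add: powr_mult)
  qed
  also have "\<dots> = ennreal (K powr s) * (\<Sum>i. ennreal (diameter (U i) powr s))"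
    by simp
  finally show "hausdorff_approx s \<delta> (F ` E) \<le> \<dots>" .
qed

lemma hausdorff_measure_lipschitz_image:
  fixes F :: "'a::metric_space \<Rightarrow> 'b::metric_space"
  assumes lip: "K-lipschitz_on E F" and "K > 0" and "0 \<le> s"
  shows "hausdorff_measure s (F ` E) \<le> ennreal (K powr s) * hausdorff_measure s E"
  unfolding hausdorff_measure_def[of s "F ` E"]
proof (rule SUP_least)
  fix \<delta> :: real assume "\<delta> \<in> {0<..}"
  then have "hausdorff_approx s (\<delta> / K) E \<le> hausdorff_measure s E"
    unfolding hausdorff_measure_def using \<open>K > 0\<close> by (intro SUP_upper) auto
  then show "hausdorff_approx s \<delta> (F ` E) \<le> ennreal (K powr s) * hausdorff_measure s E"
    using hausdorff_approx_lipschitz_image[OF assms] by (meson mult_left_mono order_trans zero_le)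
qed

lemma hausdorff_dim_lipschitz_image_le:
  fixes F :: "'a::metric_space \<Rightarrow> 'b::metric_space"
  assumes "K-lipschitz_on E F"
  shows "hausdorff_dim (F ` E) \<le> hausdorff_dim E"
  unfolding hausdorff_dim_def
proof (rule Inf_vanishing_exponents_mono)
  fix s :: real assume "0 \<le> s" "hausdorff_measure s E = 0"
  moreover have "(max 1 K)-lipschitz_on E F"
    using assms by (rule lipschitz_on_mono) auto
  ultimately show "hausdorff_measure s (F ` E) = 0"
    using hausdorff_measure_lipschitz_image[of "max 1 K" E F s] by simp
qed

section \<open>Upper box dimension\<close>

lemma covering_number_lipschitz_image:
  fixes F :: "'a::metric_space \<Rightarrow> 'b::metric_space"
  assumes lip: "K-lipschitz_on E F" and "K > 0"
  shows "covering_number \<delta> (F ` E) \<le> covering_number (\<delta> / K) E"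
  unfolding covering_number_def
proof (rule Inf_mono, clarify)
  fix n and U :: "nat \<Rightarrow> 'a set"
  assume cover: "E \<subseteq> (\<Union>i<n. U i)" and U: "\<forall>i<n. bounded (U i) \<and> diameter (U i) \<le> \<delta> / K"
  define V where "V i = F ` (U i \<inter> E)" for i
  have "F ` E \<subseteq> (\<Union>i<n. V i)"
    using cover unfolding V_def by blast
  moreover have "bounded (V i) \<and> diameter (V i) \<le> \<delta>" if "i < n" for i
    using lipschitz_on_image_Int_bounded_diameter[OF lip, of "U i"] U that
      mult_left_mono[of "diameter (U i)" "\<delta> / K" K] \<open>K > 0\<close>
    unfolding V_def by auto
  ultimately show "\<exists>m\<in>{enat n |n. \<exists>V :: nat \<Rightarrow> 'b set. F ` E \<subseteq> (\<Union>i<n. V i) \<and>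
      (\<forall>i<n. bounded (V i) \<and> diameter (V i) \<le> \<delta>)}. m \<le> enat n"
    by blast
qed

definition box_counting_ratio :: "'a::metric_space set \<Rightarrow> real \<Rightarrow> ereal" where
  "box_counting_ratio E \<delta> = (if covering_number \<delta> E = \<infinity> then \<infinity>
     else ereal (ln (real (the_enat (covering_number \<delta> E))) / - ln \<delta>))"

lemma upper_box_dim_eq_Limsup_box_counting_ratio:
  "upper_box_dim E = Limsup (at_right 0) (box_counting_ratio E)"
  unfolding upper_box_dim_def box_counting_ratio_def ..

text \<open>Also true for m = 0, because ln 0 = 0 in HOL.\<close>

lemma ln_of_nat_mono: "m \<le> n \<Longrightarrow> ln (real m) \<le> ln (real n)"
  by (cases "m = 0"; cases "n = 0") auto

lemma box_counting_ratio_lipschitz_image: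
  fixes F :: "'a::metric_space \<Rightarrow> 'b::metric_space"
  assumes lip: "K-lipschitz_on E F" and "1 \<le> K" and "0 < \<delta>" "\<delta> < 1"
  shows "box_counting_ratio (F ` E) \<delta>
    \<le> ereal (ln (\<delta> / K) / ln \<delta>) * box_counting_ratio E (\<delta> / K)"
proof -
  have "ln (\<delta> / K) < 0" and "ln \<delta> < 0"
    using assms(2-4) by (auto simp: divide_le_eq_1)
  show ?thesis
  proof (cases "covering_number (\<delta> / K) E")
    case (enat n)
    have "covering_number \<delta> (F ` E) \<le> enat n"
      using covering_number_lipschitz_image[OF lip, of \<delta>] enat \<open>1 \<le> K\<close> by simp
    then obtain m where m: "covering_number \<delta> (F ` E) = enat m" "m \<le> n"
      by (cases "covering_number \<delta> (F ` E)") auto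
    have "ln (real m) / - ln \<delta> \<le> ln (real n) / - ln \<delta>"
      using ln_of_nat_mono[OF m(2)] \<open>ln \<delta> < 0\<close> by (intro divide_right_mono) auto
    also have "\<dots> = ln (\<delta> / K) / ln \<delta> * (ln (real n) / - ln (\<delta> / K))"
      using \<open>ln (\<delta> / K) < 0\<close> by (simp add: field_simps)
    finally show ?thesis
      unfolding box_counting_ratio_def using enat m by simp
  next
    case infinity
    have "0 < ln (\<delta> / K) / ln \<delta>"
      using \<open>ln (\<delta> / K) < 0\<close> \<open>ln \<delta> < 0\<close> by (rule divide_neg_neg)
    then show ?thesis
      unfolding box_counting_ratio_def[of E]
      using infinity \<open>ln (\<delta> / K) < 0\<close> \<open>ln \<delta> < 0\<close> by simp
  qed
qed

lemma eventually_at_right_0_1: "\<forall>\<^sub>F \<delta> in at_right 0. 0 < \<delta> \<and> \<delta> < (1::real)"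
  by (rule eventually_at_rightI[where b = 1]) auto

lemma eventually_at_right_0_divide:
  fixes K :: real
  assumes "K > 0" and "eventually P (at_right 0)"
  shows "eventually (\<lambda>\<delta>. P (\<delta> / K)) (at_right 0)"
proof -
  have "filterlim (\<lambda>\<delta>. \<delta> / K) (at_right 0) (at_right 0)"
    using \<open>K > 0\<close>
    by (intro tendsto_imp_filterlim_at_right)
       (auto intro!: tendsto_eq_intros eventually_at_right_less[THEN eventually_mono])
  with assms(2) show ?thesis
    by (rule eventually_compose_filterlim)
qed

lemma tendsto_ln_ratio_at_right_0:
  fixes K :: real
  assumes "K > 0"
  shows "((\<lambda>\<delta>. ln (\<delta> / K) / ln \<delta>) \<longlongrightarrow> 1) (at_right 0)"
proof -
  have "((\<lambda>\<delta>. ln K / ln \<delta>) \<longlongrightarrow> 0) (at_right 0)"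
    by (rule tendsto_divide_0[OF tendsto_const[of "ln K"] filterlim_at_bot_imp_at_infinity[OF ln_at_0]])
  then have "((\<lambda>\<delta>. 1 - ln K / ln \<delta>) \<longlongrightarrow> 1 - 0) (at_right 0)"
    by (intro tendsto_diff tendsto_const)
  moreover have "eventually (\<lambda>\<delta>. 1 - ln K / ln \<delta> = ln (\<delta> / K) / ln \<delta>) (at_right 0)"
    using eventually_at_right_0_1
  proof eventually_elim
    case (elim \<delta>)
    then have "ln \<delta> \<noteq> 0" by simp
    then show ?case using elim \<open>K > 0\<close> by (simp add: ln_div field_simps)
  qed
  ultimately show ?thesis
    by (simp add: tendsto_cong)
qed

lemma upper_box_dim_lipschitz_image_le:
  fixes F :: "'a::metric_space \<Rightarrow> 'b::metric_space"
  assumes "K-lipschitz_on E F"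
  shows "upper_box_dim (F ` E) \<le> upper_box_dim E"
  unfolding upper_box_dim_eq_Limsup_box_counting_ratio Limsup_le_iff
proof (intro allI impI)
  define K' where "K' = max 1 K"
  have lip: "K'-lipschitz_on E F" and "1 \<le> K'"
    using assms unfolding K'_def by (auto elim: lipschitz_on_mono)
  define c where "c \<delta> = ln (\<delta> / K') / ln \<delta>" for \<delta>
  fix y assume "Limsup (at_right 0) (box_counting_ratio E) < y"
  then obtain r where r: "Limsup (at_right 0) (box_counting_ratio E) < ereal r" "ereal r < y"
    using ereal_dense2 by blast
  have "eventually (\<lambda>\<delta>. box_counting_ratio E (\<delta> / K') < ereal r) (at_right 0)"
    using \<open>1 \<le> K'\<close> Limsup_lessD[OF r(1)] by (intro eventually_at_right_0_divide) auto
  moreover have "((\<lambda>\<delta>. c \<delta> * r) \<longlongrightarrow> 1 * r) (at_right 0)"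
    using tendsto_ln_ratio_at_right_0[of K'] \<open>1 \<le> K'\<close> unfolding c_def
    by (intro tendsto_mult tendsto_const) simp
  then have "((\<lambda>\<delta>. ereal (c \<delta> * r)) \<longlongrightarrow> ereal r) (at_right 0)"
    by simp
  then have "eventually (\<lambda>\<delta>. ereal (c \<delta> * r) < y) (at_right 0)"
    using r(2) by (rule order_tendstoD)
  ultimately show "eventually (\<lambda>\<delta>. box_counting_ratio (F ` E) \<delta> < y) (at_right 0)"
    using eventually_at_right_0_1
  proof eventually_elim
    case (elim \<delta>)
    have "0 \<le> c \<delta>"
      using elim \<open>1 \<le> K'\<close> unfolding c_def by (intro divide_nonpos_neg) (auto simp: divide_le_eq_1)
    have "box_counting_ratio (F ` E) \<delta> \<le> ereal (c \<delta>) * box_counting_ratio E (\<delta> / K')"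
      using box_counting_ratio_lipschitz_image[OF lip \<open>1 \<le> K'\<close>] elim unfolding c_def by simp
    also have "\<dots> \<le> ereal (c \<delta>) * ereal r"
      using elim(1) \<open>0 \<le> c \<delta>\<close> by (intro ereal_mult_left_mono) auto
    also have "\<dots> < y"
      using elim(2) by simp
    finally show ?case .
  qed
qed

section \<open>Packing dimension\<close>

text \<open>Converse of disjoint_cballI. It fails in general metric spaces, which is why the packing
  estimates below need a normed target space.\<close>

lemma disjoint_cballD:
  fixes x y :: "'a::real_normed_vector"
  assumes disj: "cball x r \<inter> cball y s = {}" and "0 \<le> r" "0 \<le> s"
  shows "r + s < dist x y"
proof (rule ccontr)
  assume "\<not> r + s < dist x y"
  then have close: "dist x y \<le> r + s" by simp
  define t where "t = r / (r + s)"
  have t: "0 \<le> t" "t \<le> 1" "t * (r + s) = r"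
    using assms(2,3) by (auto simp: t_def divide_le_eq_1)
  define z where "z = x + t *\<^sub>R (y - x)"
  have "dist x z = t * dist x y"
    using t by (simp add: z_def dist_norm norm_minus_commute)
  also have "\<dots> \<le> r"
    using mult_left_mono[OF close t(1)] t(3) by simp
  finally have "z \<in> cball x r" by simp
  have "z - y = (1 - t) *\<^sub>R (x - y)"
    by (simp add: z_def algebra_simps)
  then have "dist z y = (1 - t) * dist x y"
    using t by (simp add: dist_norm)
  also have "\<dots> \<le> s"
    using mult_left_mono[OF close, of "1 - t"] t by (simp add: algebra_simps)
  finally have "z \<in> cball y s" by (simp add: dist_commute)
  with \<open>z \<in> cball x r\<close> disj show False by blast
qed

definition delta_packing :: "'a::metric_space set \<Rightarrow> real \<Rightarrow> ('a \<times> real) set \<Rightarrow> bool" where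
  "delta_packing E \<delta> B \<longleftrightarrow> finite B \<and> (\<forall>(x, r) \<in> B. x \<in> E \<and> 0 < r \<and> r \<le> \<delta>) \<and>
     disjoint_family_on (\<lambda>(x, r). cball x r) B"

lemma packing_approx_eq_SUP_delta_packing:
  "packing_approx s \<delta> E = (SUP B \<in> {B. delta_packing E \<delta> B}. \<Sum>(x, r) \<in> B. ennreal ((2 * r) powr s))"
  unfolding packing_approx_def delta_packing_def ..

lemma delta_packing_lipschitz_preimage:
  fixes F :: "'a::metric_space \<Rightarrow> 'b::real_normed_vector"
  assumes lip: "K-lipschitz_on E F" and "K > 0" and B: "delta_packing (F ` E) \<delta> B"
  defines "g \<equiv> \<lambda>(y, r). (inv_into E F y, r / K)"
  shows "delta_packing E (\<delta> / K) (g ` B)" and "inj_on g B"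
proof -
  have B_fin: "finite B" and B_ball: "\<And>y r. (y, r) \<in> B \<Longrightarrow> y \<in> F ` E \<and> 0 < r \<and> r \<le> \<delta>"
    and B_disj: "disjoint_family_on (\<lambda>(y, r). cball y r) B"
    using B unfolding delta_packing_def by auto
  have g_disj: "cball (inv_into E F y) (r / K) \<inter> cball (inv_into E F y') (r' / K) = {}"
    if "(y, r) \<in> B" "(y', r') \<in> B" "(y, r) \<noteq> (y', r')" for y r y' r'
  proof (rule disjoint_cballI)
    have "cball y r \<inter> cball y' r' = {}"
      using B_disj that unfolding disjoint_family_on_def by fastforce
    then have "r + r' < dist y y'"
      using B_ball that by (intro disjoint_cballD) (auto simp: less_imp_le)
    also have "\<dots> \<le> K * dist (inv_into E F y) (inv_into E F y')"
      using lipschitz_onD[OF lip] B_ball that by (metis f_inv_into_f inv_into_into)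
    finally show "r / K + r' / K < dist (inv_into E F y) (inv_into E F y')"
      using \<open>K > 0\<close> by (simp add: add_divide_distrib[symmetric] divide_less_eq mult.commute)
  qed
  show "inj_on g B"
  proof (rule inj_onI, clarify)
    fix y r y' r' assume "(y, r) \<in> B" "(y', r') \<in> B" "g (y, r) = g (y', r')"
    moreover have "0 < r / K"
      using B_ball \<open>(y, r) \<in> B\<close> \<open>K > 0\<close> by simp
    ultimately show "y = y' \<and> r = r'"
      using g_disj[of y r y' r'] \<open>K > 0\<close> by (fastforce simp: g_def)
  qed
  have "disjoint_family_on (\<lambda>(x, r). cball x r) (g ` B)"
    unfolding disjoint_family_on_def
  proof (intro ballI impI)
    fix m n assume "m \<in> g ` B" "n \<in> g ` B" "m \<noteq> n"
    then obtain y r y' r' where "(y, r) \<in> B" "(y', r') \<in> B" "m = g (y, r)" "n = g (y', r')"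
      by auto
    with \<open>m \<noteq> n\<close> show "(\<lambda>(x, r). cball x r) m \<inter> (\<lambda>(x, r). cball x r) n = {}"
      using g_disj by (auto simp: g_def)
  qed
  then show "delta_packing E (\<delta> / K) (g ` B)"
    unfolding delta_packing_def using B_fin B_ball \<open>K > 0\<close>
    by (auto simp: g_def inv_into_into divide_right_mono)
qed

lemma packing_approx_lipschitz_image:
  fixes F :: "'a::metric_space \<Rightarrow> 'b::real_normed_vector"
  assumes lip: "K-lipschitz_on E F" and "K > 0" and "0 \<le> s"
  shows "packing_approx s \<delta> (F ` E) \<le> ennreal (K powr s) * packing_approx s (\<delta> / K) E"
  unfolding packing_approx_eq_SUP_delta_packing[of s \<delta>]
proof (rule SUP_least, clarify)
  fix B assume B: "delta_packing (F ` E) \<delta> B"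
  define g where "g = (\<lambda>(y::'b, r::real). (inv_into E F y, r / K))"
  have term_eq: "(2 * r) powr s = K powr s * (2 * (r / K)) powr s" if "0 < r" for r
    using \<open>K > 0\<close> that by (simp add: powr_mult[symmetric])
  have pos: "\<And>y r. (y, r) \<in> B \<Longrightarrow> 0 < r"
    using B unfolding delta_packing_def by auto
  have "(\<Sum>(y, r) \<in> B. ennreal ((2 * r) powr s))
      = ennreal (K powr s) * (\<Sum>(x, r) \<in> g ` B. ennreal ((2 * r) powr s))"
    using delta_packing_lipschitz_preimage(2)[OF lip \<open>K > 0\<close> B]
    by (auto simp: sum_distrib_left sum.reindex g_def term_eq pos ennreal_mult
        intro!: sum.cong)
  also have "\<dots> \<le> ennreal (K powr s) * packing_approx s (\<delta> / K) E"
    unfolding packing_approx_eq_SUP_delta_packing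
    using delta_packing_lipschitz_preimage(1)[OF lip \<open>K > 0\<close> B]
    by (intro mult_left_mono SUP_upper) (auto simp: g_def)
  finally show "(\<Sum>(y, r) \<in> B. ennreal ((2 * r) powr s)) \<le> \<dots>" .
qed

lemma packing_approx_mono:
  "S \<subseteq> T \<Longrightarrow> packing_approx s \<delta> S \<le> packing_approx s \<delta> T"
  unfolding packing_approx_def by (rule SUP_subset_mono) auto

lemma packing_premeasure_mono:
  "S \<subseteq> T \<Longrightarrow> packing_premeasure s S \<le> packing_premeasure s T"
  unfolding packing_premeasure_def by (intro INF_mono) (blast intro: packing_approx_mono)

lemma packing_premeasure_lipschitz_image:
  fixes F :: "'a::metric_space \<Rightarrow> 'b::real_normed_vector"
  assumes lip: "K-lipschitz_on E F" and "K > 0" and "0 \<le> s"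
  shows "packing_premeasure s (F ` E) \<le> ennreal (K powr s) * packing_premeasure s E"
  unfolding packing_premeasure_def[of s E]
proof (rule ennreal_le_mult_INF)
  show "K powr s > 0" using \<open>K > 0\<close> by simp
  fix \<delta> :: real assume "\<delta> \<in> {0<..}"
  then have "packing_premeasure s (F ` E) \<le> packing_approx s (K * \<delta>) (F ` E)"
    unfolding packing_premeasure_def using \<open>K > 0\<close> by (intro INF_lower) auto
  also have "\<dots> \<le> ennreal (K powr s) * packing_approx s \<delta> E"
    using packing_approx_lipschitz_image[OF assms, of "K * \<delta>"] \<open>K > 0\<close> by simp
  finally show "packing_premeasure s (F ` E) \<le> \<dots>" .
qed

lemma packing_measure_lipschitz_image:
  fixes F :: "'a::metric_space \<Rightarrow> 'b::real_normed_vector"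
  assumes lip: "K-lipschitz_on E F" and "K > 0" and "0 \<le> s"
  shows "packing_measure s (F ` E) \<le> ennreal (K powr s) * packing_measure s E"
  unfolding packing_measure_def[of s E]
proof (rule ennreal_le_mult_INF)
  show "K powr s > 0" using \<open>K > 0\<close> by simp
  fix U :: "nat \<Rightarrow> 'a set" assume "U \<in> {U. E \<subseteq> (\<Union>i. U i)}"
  then have "F ` E \<subseteq> (\<Union>i. F ` (U i \<inter> E))" by blast
  then have "packing_measure s (F ` E) \<le> (\<Sum>i. packing_premeasure s (F ` (U i \<inter> E)))"
    unfolding packing_measure_def by (intro INF_lower) auto
  also have "\<dots> \<le> (\<Sum>i. ennreal (K powr s) * packing_premeasure s (U i))"
  proof (rule suminf_le)
    fix i
    have "packing_premeasure s (F ` (U i \<inter> E))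
        \<le> ennreal (K powr s) * packing_premeasure s (U i \<inter> E)"
      using lipschitz_on_subset[OF lip] \<open>K > 0\<close> \<open>0 \<le> s\<close>
      by (intro packing_premeasure_lipschitz_image) auto
    also have "\<dots> \<le> ennreal (K powr s) * packing_premeasure s (U i)"
      by (intro mult_left_mono packing_premeasure_mono) auto
    finally show "packing_premeasure s (F ` (U i \<inter> E)) \<le> \<dots>" .
  qed auto
  also have "\<dots> = ennreal (K powr s) * (\<Sum>i. packing_premeasure s (U i))"
    by simp
  finally show "packing_measure s (F ` E) \<le> \<dots>" .
qed

lemma packing_dim_lipschitz_image_le:
  fixes F :: "'a::metric_space \<Rightarrow> 'b::real_normed_vector"
  assumes "K-lipschitz_on E F"
  shows "packing_dim (F ` E) \<le> packing_dim E"
  unfolding packing_dim_def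
proof (rule Inf_vanishing_exponents_mono)
  fix s :: real assume "0 \<le> s" "packing_measure s E = 0"
  moreover have "(max 1 K)-lipschitz_on E F"
    using assms by (rule lipschitz_on_mono) auto
  ultimately show "packing_measure s (F ` E) = 0"
    using packing_measure_lipschitz_image[of "max 1 K" E F s] by simp
qed

section \<open>Graphs\<close>

lemma lipschitz_on_fst: "1-lipschitz_on S fst"
  by (rule lipschitz_onI) (auto simp: dist_fst_le)

lemma fst_image_graph_on: "fst ` graph_on I u = I"
  unfolding graph_on_def by force

lemma graph_on_map_image: "(\<lambda>p. (fst p, v (fst p))) ` graph_on I u = graph_on I v"
  unfolding graph_on_def by force

lemma lipschitz_on_graph_on_fst:
  "C-lipschitz_on I h \<Longrightarrow> C-lipschitz_on (graph_on I u) (\<lambda>p. h (fst p))"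
  using lipschitz_on_compose2[where f = fst and U = "graph_on I u", OF lipschitz_on_fst]
  by (simp add: fst_image_graph_on)

lemma lipschitz_on_graph_on_snd: "1-lipschitz_on (graph_on I u) (\<lambda>p. u (fst p))"
proof (rule lipschitz_onI)
  fix p q assume "p \<in> graph_on I u" "q \<in> graph_on I u"
  then have "u (fst p) = snd p" "u (fst q) = snd q"
    unfolding graph_on_def by auto
  then show "dist (u (fst p)) (u (fst q)) \<le> 1 * dist p q"
    by (simp add: dist_snd_le)
qed simp

lemma lipschitz_on_graph_on_comp:
  assumes "C-lipschitz_on (u ` I) \<phi>"
  shows "C-lipschitz_on (graph_on I u) (\<lambda>p. \<phi> (u (fst p)))"
proof -
  have "(\<lambda>p. u (fst p)) ` graph_on I u = u ` I"
    unfolding graph_on_def by force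
  with assms have "C-lipschitz_on ((\<lambda>p. u (fst p)) ` graph_on I u) \<phi>"
    by simp
  from lipschitz_on_compose2[OF lipschitz_on_graph_on_snd this] show ?thesis
    by simp
qed

lemma lipschitz_on_complex_of_real_pair:
  "1-lipschitz_on S (\<lambda>(y, z). complex_of_real y + \<i> * complex_of_real z)"
  by (rule lipschitz_onI) (auto simp: dist_norm norm_Pair norm_complex_def)

lemma lipschitz_on_Re_Im: "1-lipschitz_on S (\<lambda>w. (Re w, Im w))"
  by (rule lipschitz_onI) (auto simp: dist_norm norm_Pair norm_complex_def)

lemma graph_on_dims_le:
  fixes u :: "real \<Rightarrow> 'a::real_normed_vector" and v :: "real \<Rightarrow> 'b::real_normed_vector"
  assumes "L-lipschitz_on (graph_on I u) (\<lambda>p. v (fst p))"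
  shows "hausdorff_dim (graph_on I v) \<le> hausdorff_dim (graph_on I u)"
    and "upper_box_dim (graph_on I v) \<le> upper_box_dim (graph_on I u)"
    and "packing_dim (graph_on I v) \<le> packing_dim (graph_on I u)"
proof -
  have lip: "(sqrt (1\<^sup>2 + L\<^sup>2))-lipschitz_on (graph_on I u) (\<lambda>p. (fst p, v (fst p)))"
    by (rule lipschitz_on_Pair[OF lipschitz_on_fst assms])
  show "hausdorff_dim (graph_on I v) \<le> hausdorff_dim (graph_on I u)"
    using hausdorff_dim_lipschitz_image_le[OF lip] by (simp add: graph_on_map_image)
  show "upper_box_dim (graph_on I v) \<le> upper_box_dim (graph_on I u)"
    using upper_box_dim_lipschitz_image_le[OF lip] by (simp add: graph_on_map_image)
  show "packing_dim (graph_on I v) \<le> packing_dim (graph_on I u)"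
    using packing_dim_lipschitz_image_le[OF lip] by (simp add: graph_on_map_image)
qed

definition same_dimensions :: "'a::metric_space set \<Rightarrow> 'b::metric_space set \<Rightarrow> bool" where
  "same_dimensions E E' \<longleftrightarrow> hausdorff_dim E = hausdorff_dim E' \<and>
     upper_box_dim E = upper_box_dim E' \<and> packing_dim E = packing_dim E'"

lemma graph_on_same_dimensions:
  fixes u :: "real \<Rightarrow> 'a::real_normed_vector" and v :: "real \<Rightarrow> 'b::real_normed_vector"
  assumes "L-lipschitz_on (graph_on I u) (\<lambda>p. v (fst p))"
    and "M-lipschitz_on (graph_on I v) (\<lambda>p. u (fst p))"
  shows "same_dimensions (graph_on I u) (graph_on I v)"
  unfolding same_dimensions_def
  using graph_on_dims_le[OF assms(1)] graph_on_dims_le[OF assms(2)] by (blast intro: order.antisym)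

theorem mainTheorem4:
  fixes f :: "real \<Rightarrow> complex" and a b :: real
  assumes "continuous_on {a..b} f"
    and "\<exists>L. L-lipschitz_on {a..b} (\<lambda>x. Im (f x))"
  shows
   "hausdorff_dim (graph_on {a..b} (\<lambda>x. complex_of_real (Re (f x)) + \<i> * complex_of_real (Im (f x))))
      = hausdorff_dim (graph_on {a..b} (\<lambda>x. Re (f x) + Im (f x))) \<and>
    hausdorff_dim (graph_on {a..b} (\<lambda>x. Re (f x) + Im (f x)))
      = hausdorff_dim (graph_on {a..b} (\<lambda>x. (Re (f x), Im (f x)))) \<and>
    hausdorff_dim (graph_on {a..b} (\<lambda>x. (Re (f x), Im (f x))))
      = hausdorff_dim (graph_on {a..b} (\<lambda>x. Re (f x))) \<and>
    upper_box_dim (graph_on {a..b} (\<lambda>x. complex_of_real (Re (f x)) + \<i> * complex_of_real (Im (f x))))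
      = upper_box_dim (graph_on {a..b} (\<lambda>x. Re (f x) + Im (f x))) \<and>
    upper_box_dim (graph_on {a..b} (\<lambda>x. Re (f x) + Im (f x)))
      = upper_box_dim (graph_on {a..b} (\<lambda>x. (Re (f x), Im (f x)))) \<and>
    upper_box_dim (graph_on {a..b} (\<lambda>x. (Re (f x), Im (f x))))
      = upper_box_dim (graph_on {a..b} (\<lambda>x. Re (f x))) \<and>
    packing_dim (graph_on {a..b} (\<lambda>x. complex_of_real (Re (f x)) + \<i> * complex_of_real (Im (f x))))
      = packing_dim (graph_on {a..b} (\<lambda>x. Re (f x) + Im (f x))) \<and>
    packing_dim (graph_on {a..b} (\<lambda>x. Re (f x) + Im (f x)))
      = packing_dim (graph_on {a..b} (\<lambda>x. (Re (f x), Im (f x)))) \<and>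
    packing_dim (graph_on {a..b} (\<lambda>x. (Re (f x), Im (f x))))
      = packing_dim (graph_on {a..b} (\<lambda>x. Re (f x)))"
proof -
  let ?I = "{a..b}"
  obtain K where h: "K-lipschitz_on ?I (\<lambda>x. Im (f x))"
    using assms(2) by blast
  have h_graph: "K-lipschitz_on (graph_on ?I u) (\<lambda>p. Im (f (fst p)))" for u :: "real \<Rightarrow> real"
    using h by (rule lipschitz_on_graph_on_fst)
  have "same_dimensions (graph_on ?I (\<lambda>x. (Re (f x), Im (f x)))) (graph_on ?I (\<lambda>x. Re (f x)))"
    using lipschitz_on_graph_on_comp[OF lipschitz_on_fst, of ?I "\<lambda>x. (Re (f x), Im (f x))"]
      lipschitz_on_Pair[OF lipschitz_on_graph_on_snd h_graph]
    by (intro graph_on_same_dimensions) simp_all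
  moreover have "same_dimensions (graph_on ?I (\<lambda>x. Re (f x) + Im (f x))) (graph_on ?I (\<lambda>x. Re (f x)))"
    using lipschitz_on_diff[OF lipschitz_on_graph_on_snd[of ?I "\<lambda>x. Re (f x) + Im (f x)"] h_graph]
      lipschitz_on_add[OF lipschitz_on_graph_on_snd[of ?I "\<lambda>x. Re (f x)"] h_graph]
    by (intro graph_on_same_dimensions) simp_all
  moreover have "same_dimensions
      (graph_on ?I (\<lambda>x. complex_of_real (Re (f x)) + \<i> * complex_of_real (Im (f x))))
      (graph_on ?I (\<lambda>x. (Re (f x), Im (f x))))"
    using lipschitz_on_graph_on_comp[OF lipschitz_on_Re_Im,
        of ?I "\<lambda>x. complex_of_real (Re (f x)) + \<i> * complex_of_real (Im (f x))"]
      lipschitz_on_graph_on_comp[OF lipschitz_on_complex_of_real_pair,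
        of ?I "\<lambda>x. (Re (f x), Im (f x))"]
    by (intro graph_on_same_dimensions) simp_all
  ultimately show ?thesis
    unfolding same_dimensions_def by simp
qed

end
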